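(* Let $F:(0,\infty)\times(0,\infty)\to\mathbb{R}$ satisfy Assumption (P) below, let $G$ be the function in (P)(ii), and let $f>0$. (i) Fix $\alpha>0$ and $\beta>0$. If $G(\beta)/\alpha<1/(1+f)$, then the system $$\frac{1-d^A}{1-d^B}=\frac{1}{\beta}G^{-1}\big(\alpha/(1+f)\big),\qquad F\big(\beta(1-d^A),1-d^B\big)=F(\beta,1)$$ admits a unique solution $(d^A,d^B)$ with $d^A\in(0,1)$ and $d^B<0$. If $G(\beta)/\alpha>1+f$, then the system $$\frac{1-d^A}{1-d^B}=\frac{1}{\beta}G^{-1}\big(\alpha(1+f)\big),\qquad F\big(\beta(1-d^A),1-d^B\big)=F(\beta,1)$$ admits a unique solution $(d^A,d^B)$ with $d^A<0$ and $d^B\in(0,1)$. Denote by $(\varphi^A(\alpha,\beta),\varphi^B(\alpha,\beta))$ the solution in these two cases, and set $(\varphi^A(\alpha,\beta),\varphi^B(\alpha,\beta))=(0,0)$ when $G(\beta)/\alpha\in[1/(1+f),1+f]$. Then for $i\in\{A,B\}$, $\varphi^i$ is continuous on $(0,\infty)\times(0,\infty)$ and equals $0$ on the region $\{G(\beta)/\alpha\in[1/(1+f),1+f]\}$; moreover, on the region $\{G(\beta)/\alpha\notin[1/(1+f),1+f]\}$, $\varphi^A(\alpha,\beta)$ is strictly increasing and $\varphi^B(\alpha,\beta)$ is strictly decreasing in each of $\alpha$ and $\beta$. (ii) For any $y^A>0$, $y^B>0$, $a>0$, $b>0$, the optimization problem $$\max_{D^A,D^B}\; a(1+f\mathbf 1_{D^A<0})D^A+b(1+f\mathbf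 1_{D^B<0})D^B$$ subject to $F(y^A,y^B)=F(y^A-D^A,y^B-D^B)$, $y^A-D^A>0$, $y^B-D^B>0$, admits a unique solution $(\hat D^A,\hat D^B)$, given by $\hat D^i=\varphi^i(a/b,\,y^A/y^B)\,y^i$ for $i\in\{A,B\}$.
   Context: Assumption (P) on the pricing function $F:(0,\infty)\times(0,\infty)\to\mathbb{R}$: (i) $F$ is continuously differentiable with partial derivatives $F_x(x,y)>0$ and $F_y(x,y)>0$ for all $x,y>0$; (ii) $F_x(x,y)/F_y(x,y)=G(x/y)$ for some continuously differentiable function $G:(0,\infty)\to(0,\infty)$ with $G'(z)<0$ for all $z>0$, $\lim_{z\downarrow0}G(z)=\infty$ and $\lim_{z\uparrow\infty}G(z)=0$; (iii) if $F(x,y)=F(x',y')$ then $F(cx,cy)=F(cx',cy')$ for every $c>0$. $G^{-1}$ denotes the inverse function of $G$. The constant $f>0$ is the unit trading fee; in the optimization problem, $y^A,y^B$ are the pool deposits of assets $A,B$, $D^i$ is the amount of asset $i$ withdrawn from the pool by the trader (negative means deposited), and $a,b$ are the trader's valuations of the assets. *)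

theory Defs
  imports "HOL-Analysis.Analysis"
begin

text \<open>Assumption (P) on the pricing function F (curried, only its values on the
open positive quadrant matter) with associated function G.\<close>
definition assumption_P :: "(real \<Rightarrow> real \<Rightarrow> real) \<Rightarrow> (real \<Rightarrow> real) \<Rightarrow> bool" where
  "assumption_P F G \<longleftrightarrow>
     (\<exists>Fx Fy :: real \<Rightarrow> real \<Rightarrow> real.
        continuous_on {p :: real \<times> real. fst p > 0 \<and> snd p > 0} (\<lambda>(x, y). Fx x y) \<and>
        continuous_on {p :: real \<times> real. fst p > 0 \<and> snd p > 0} (\<lambda>(x, y). Fy x y) \<and>
        (\<forall>x>0. \<forall>y>0.
           ((\<lambda>(u, v). F u v) has_derivative (\<lambda>(h, k). Fx x y * h + Fy x y * k)) (at (x, y)) \<and>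
           Fx x y > 0 \<and> Fy x y > 0 \<and> Fx x y / Fy x y = G (x / y))) \<and>
     (\<forall>z>0. G z > 0) \<and>
     (\<exists>G'. continuous_on {0<..} G' \<and>
        (\<forall>z>0. (G has_real_derivative G' z) (at z) \<and> G' z < 0)) \<and>
     filterlim G at_top (at_right 0) \<and>
     (G \<longlongrightarrow> 0) at_top \<and>
     (\<forall>x y x' y' c. x > 0 \<and> y > 0 \<and> x' > 0 \<and> y' > 0 \<and> c > 0 \<and> F x y = F x' y'
        \<longrightarrow> F (c * x) (c * y) = F (c * x') (c * y'))"

definition Ginv :: "(real \<Rightarrow> real) \<Rightarrow> real \<Rightarrow> real" where
  "Ginv G w = inv_into {0<..} G w"

definition phi_sys :: "(real \<Rightarrow> real \<Rightarrow> real) \<Rightarrow> (real \<Rightarrow> real) \<Rightarrow> real \<Rightarrow> real \<Rightarrow> real \<Rightarrow> real \<Rightarrow> bool" where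
  "phi_sys F G c \<beta> dA dB \<longleftrightarrow>
     (1 - dA) / (1 - dB) = (1 / \<beta>) * Ginv G c \<and> F (\<beta> * (1 - dA)) (1 - dB) = F \<beta> 1"

definition phi :: "(real \<Rightarrow> real \<Rightarrow> real) \<Rightarrow> (real \<Rightarrow> real) \<Rightarrow> real \<Rightarrow> real \<Rightarrow> real \<Rightarrow> real \<times> real" where
  "phi F G f \<alpha> \<beta> =
     (if G \<beta> / \<alpha> < 1 / (1 + f) then
        (THE p. 0 < fst p \<and> fst p < 1 \<and> snd p < 0 \<and> phi_sys F G (\<alpha> / (1 + f)) \<beta> (fst p) (snd p))
      else if G \<beta> / \<alpha> > 1 + f then
        (THE p. fst p < 0 \<and> 0 < snd p \<and> snd p < 1 \<and> phi_sys F G (\<alpha> * (1 + f)) \<beta> (fst p) (snd p))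
      else (0, 0))"

definition phiA where "phiA F G f \<alpha> \<beta> = fst (phi F G f \<alpha> \<beta>)"
definition phiB where "phiB F G f \<alpha> \<beta> = snd (phi F G f \<alpha> \<beta>)"

definition no_trade :: "(real \<Rightarrow> real) \<Rightarrow> real \<Rightarrow> real \<Rightarrow> real \<Rightarrow> bool" where
  "no_trade G f \<alpha> \<beta> \<longleftrightarrow> 1 / (1 + f) \<le> G \<beta> / \<alpha> \<and> G \<beta> / \<alpha> \<le> 1 + f"

definition trade_obj :: "real \<Rightarrow> real \<Rightarrow> real \<Rightarrow> real \<Rightarrow> real \<Rightarrow> real" where
  "trade_obj f a b DA DB =
     a * (1 + f * (if DA < 0 then 1 else 0)) * DA + b * (1 + f * (if DB < 0 then 1 else 0)) * DB"

definition feasible :: "(real \<Rightarrow> real \<Rightarrow> real) \<Rightarrow> real \<Rightarrow> real \<Rightarrow> real \<Rightarrow> real \<Rightarrow> bool" where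
  "feasible F yA yB DA DB \<longleftrightarrow> F yA yB = F (yA - DA) (yB - DB) \<and> yA - DA > 0 \<and> yB - DB > 0"

end

theory Submission
  imports Defs
begin

text \<open>The optimal trade moves the pool along its level curve of F to the point where the marginal
  rate G(x/y) equals the fee-adjusted valuation ratio; as G is decreasing, the post-trade ratio is
  the current ratio \<beta> clamped to [Ginv (\<alpha>(1+f)), Ginv (\<alpha>/(1+f))]. By homotheticity every level
  curve is a rescaling of the one through (1, 1), which meets the ray of ratio r at a point
  (r \<psi>(r), \<psi>(r)) with \<psi> continuous, \<psi> decreasing and r \<psi>(r) increasing; continuity and
  monotonicity of \<phi> follow from these. Optimality: the level sets of F are strictly convex, so every
  other feasible post-trade point lies strictly above the tangent line at the chosen one, while the
  fee-weighted objective is concave with a supergradient normal to that tangent line.\<close>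

text \<open>p is a supergradient at x of the concave map x' \<mapsto> a (1 + f [x' < 0]) x', one term of trade_obj.\<close>
definition fee_supergradient :: "real \<Rightarrow> real \<Rightarrow> real \<Rightarrow> real \<Rightarrow> bool" where
  "fee_supergradient a f x p \<longleftrightarrow>
     a \<le> p \<and> p \<le> a * (1 + f) \<and> (x > 0 \<longrightarrow> p = a) \<and> (x < 0 \<longrightarrow> p = a * (1 + f))"

lemma fee_supergradient_scale:
  "c > 0 \<Longrightarrow> fee_supergradient a f (c * x) p \<longleftrightarrow> fee_supergradient a f x p"
  unfolding fee_supergradient_def by (simp add: zero_less_mult_iff mult_less_0_iff)

lemma fee_weighted_le_supergradient:
  fixes a f x x' p :: real
  assumes "fee_supergradient a f x p"
  shows "a * (1 + f * (if x' < 0 then 1 else 0)) * x' \<le> a * (1 + f * (if x < 0 then 1 else 0)) * x + p * (x' - x)"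
proof -
  have "a * (1 + f * (if x' < 0 then 1 else 0)) * x' \<le> p * x'"
    using assms unfolding fee_supergradient_def
    by (cases "x' < 0") (auto intro: mult_right_mono mult_right_mono_neg)
  moreover have "a * (1 + f * (if x < 0 then 1 else 0)) * x = p * x"
    using assms unfolding fee_supergradient_def by (cases x "0::real" rule: linorder_cases) auto
  ultimately show ?thesis by (simp add: algebra_simps)
qed

lemma trade_obj_le_supergradient:
  assumes "fee_supergradient a f DA pA" "fee_supergradient b f DB pB"
  shows "trade_obj f a b DA' DB' \<le> trade_obj f a b DA DB + pA * (DA' - DA) + pB * (DB' - DB)"
  using fee_weighted_le_supergradient[OF assms(1), of DA'] fee_weighted_le_supergradient[OF assms(2), of DB']
  unfolding trade_obj_def by linarith

lemma no_trade_iff: "no_trade G f \<alpha> \<beta> \<longleftrightarrow> \<not> G \<beta> / \<alpha> < 1 / (1 + f) \<and> \<not> G \<beta> / \<alpha> > 1 + f"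
  unfolding no_trade_def by linarith

locale marginal_rate =
  fixes G :: "real \<Rightarrow> real"
  assumes G_pos: "z > 0 \<Longrightarrow> G z > 0"
    and G_strict_antimono: "0 < u \<Longrightarrow> u < v \<Longrightarrow> G v < G u"
    and G_continuous: "z > 0 \<Longrightarrow> isCont G z"
    and G_at_right_0: "filterlim G at_top (at_right 0)"
    and G_at_top: "(G \<longlongrightarrow> 0) at_top"
begin

lemma G_less_iff: "0 < u \<Longrightarrow> 0 < v \<Longrightarrow> G u < G v \<longleftrightarrow> v < u"
  using G_strict_antimono[of u v] G_strict_antimono[of v u] by (cases u v rule: linorder_cases) auto

lemma G_inj: "inj_on G {0<..}"
proof (rule inj_onI)
  fix u v assume "u \<in> {0<..}" "v \<in> {0<..}" "G u = G v"
  then show "u = v"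
    using G_strict_antimono[of u v] G_strict_antimono[of v u] by (cases u v rule: linorder_cases) auto
qed

lemma G_surj:
  assumes "c > 0" shows "\<exists>z>0. G z = c"
proof -
  obtain b where b: "b > 0" "\<And>z. 0 < z \<Longrightarrow> z < b \<Longrightarrow> c \<le> G z"
    using G_at_right_0 unfolding filterlim_at_top eventually_at_right_field by blast
  define z0 where "z0 = b / 2"
  have z0: "z0 > 0" "c \<le> G z0" using b unfolding z0_def by auto
  obtain N where N: "\<And>z. z \<ge> N \<Longrightarrow> G z < c"
    using order_tendstoD(2)[OF G_at_top assms] unfolding eventually_at_top_linorder by blast
  define z1 where "z1 = max N (z0 + 1)"
  have z1: "z0 \<le> z1" "G z1 \<le> c" using N[of z1] unfolding z1_def by auto
  have "\<forall>z. z0 \<le> z \<and> z \<le> z1 \<longrightarrow> isCont G z"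
    using z0(1) G_continuous by auto
  then obtain z where "z0 \<le> z" "G z = c" using IVT2[OF z1(2) z0(2) z1(1)] by blast
  then show ?thesis using z0(1) by (intro exI[of _ z]) auto
qed

lemma Ginv_pos: "c > 0 \<Longrightarrow> Ginv G c > 0"
  and G_Ginv: "c > 0 \<Longrightarrow> G (Ginv G c) = c"
  using G_surj inv_into_into[of c G "{0<..}"] f_inv_into_f[of c G "{0<..}"]
  by (fastforce simp: Ginv_def)+

lemma Ginv_G: "z > 0 \<Longrightarrow> Ginv G (G z) = z"
  unfolding Ginv_def using inv_into_f_f[OF G_inj] by simp

lemma Ginv_less_iff: "c > 0 \<Longrightarrow> \<beta> > 0 \<Longrightarrow> Ginv G c < \<beta> \<longleftrightarrow> G \<beta> < c"
  using G_less_iff[of \<beta> "Ginv G c"] by (simp add: Ginv_pos G_Ginv)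

lemma less_Ginv_iff: "c > 0 \<Longrightarrow> \<beta> > 0 \<Longrightarrow> \<beta> < Ginv G c \<longleftrightarrow> c < G \<beta>"
  using G_less_iff[of "Ginv G c" \<beta>] by (simp add: Ginv_pos G_Ginv)

lemma Ginv_strict_antimono: "0 < c \<Longrightarrow> c < d \<Longrightarrow> Ginv G d < Ginv G c"
  using Ginv_less_iff[of d "Ginv G c"] by (simp add: Ginv_pos G_Ginv)

lemma Ginv_continuous_on: "continuous_on {0<..} (Ginv G)"
proof (rule continuous_at_imp_continuous_on, safe)
  fix c :: real assume "c > 0"
  let ?z = "Ginv G c"
  have "isCont (Ginv G) (G ?z)"
  proof (rule isCont_inverse_function[where f = G and g = "Ginv G" and x = ?z and d = "?z / 2"])
    show "0 < ?z / 2" using Ginv_pos[OF \<open>c > 0\<close>] by simp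
  next
    fix z assume "\<bar>z - ?z\<bar> \<le> ?z / 2"
    then have "z > 0" using Ginv_pos[OF \<open>c > 0\<close>] by linarith
    then show "Ginv G (G z) = z" "isCont G z" by (simp_all add: Ginv_G G_continuous)
  qed
  then show "isCont (Ginv G) c" using G_Ginv[OF \<open>c > 0\<close>] by simp
qed

end

locale homothetic_pricing = marginal_rate G
  for G :: "real \<Rightarrow> real" +
  fixes F Fx Fy :: "real \<Rightarrow> real \<Rightarrow> real"
  assumes F_has_derivative: "x > 0 \<Longrightarrow> y > 0 \<Longrightarrow>
      ((\<lambda>(u, v). F u v) has_derivative (\<lambda>(h, k). Fx x y * h + Fy x y * k)) (at (x, y))"
    and Fx_pos: "x > 0 \<Longrightarrow> y > 0 \<Longrightarrow> Fx x y > 0"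
    and Fy_pos: "x > 0 \<Longrightarrow> y > 0 \<Longrightarrow> Fy x y > 0"
    and marginal_rate_eq: "x > 0 \<Longrightarrow> y > 0 \<Longrightarrow> Fx x y / Fy x y = G (x / y)"
    and homothetic: "x > 0 \<Longrightarrow> y > 0 \<Longrightarrow> x' > 0 \<Longrightarrow> y' > 0 \<Longrightarrow> c > 0 \<Longrightarrow> F x y = F x' y'
      \<Longrightarrow> F (c * x) (c * y) = F (c * x') (c * y')"

lemma assumption_P_imp_homothetic_pricing:
  assumes "assumption_P F G"
  shows "\<exists>Fx Fy. homothetic_pricing G F Fx Fy"
proof -
  obtain Fx Fy G' where F:
      "\<forall>x>0. \<forall>y>0. ((\<lambda>(u, v). F u v) has_derivative (\<lambda>(h, k). Fx x y * h + Fy x y * k)) (at (x, y)) \<and>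
         Fx x y > 0 \<and> Fy x y > 0 \<and> Fx x y / Fy x y = G (x / y)"
    and G: "\<forall>z>0. G z > 0" "\<forall>z>0. (G has_real_derivative G' z) (at z) \<and> G' z < 0"
      "filterlim G at_top (at_right 0)" "(G \<longlongrightarrow> 0) at_top"
    and hom: "\<forall>x y x' y' c. x > 0 \<and> y > 0 \<and> x' > 0 \<and> y' > 0 \<and> c > 0 \<and> F x y = F x' y'
        \<longrightarrow> F (c * x) (c * y) = F (c * x') (c * y')"
    using assms unfolding assumption_P_def by blast
  have "G v < G u" if "0 < u" "u < v" for u v
  proof (rule DERIV_neg_imp_decreasing[OF that(2)])
    fix z assume "u \<le> z"
    then have "z > 0" using that(1) by linarith
    then show "\<exists>d. (G has_real_derivative d) (at z) \<and> d < 0" using G(2) by blast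
  qed
  moreover have "isCont G z" if "z > 0" for z
    using G(2) that DERIV_isCont by blast
  ultimately have "marginal_rate G"
    using G by unfold_locales auto
  then have "homothetic_pricing G F Fx Fy"
    using F hom unfolding homothetic_pricing_def homothetic_pricing_axioms_def by blast
  then show ?thesis by blast
qed

context homothetic_pricing
begin

lemma F_line_derivative:
  assumes "x + s * dx > 0" "y + s * dy > 0"
  shows "((\<lambda>s. F (x + s * dx) (y + s * dy)) has_real_derivative
           Fx (x + s * dx) (y + s * dy) * dx + Fy (x + s * dx) (y + s * dy) * dy) (at s)"
proof -
  have "((\<lambda>s. (x + s * dx, y + s * dy)) has_derivative (\<lambda>h. (h * dx, h * dy))) (at s)"
    by (intro derivative_eq_intros) auto
  from has_derivative_compose[OF this F_has_derivative[OF assms]]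
  have "((\<lambda>s. F (x + s * dx) (y + s * dy)) has_derivative
          (\<lambda>h. Fx (x + s * dx) (y + s * dy) * (h * dx) + Fy (x + s * dx) (y + s * dy) * (h * dy))) (at s)"
    by simp
  then show ?thesis unfolding has_field_derivative_def
    by (rule has_derivative_eq_rhs) (auto simp: fun_eq_iff algebra_simps)
qed

lemma F_mean_value:
  assumes "x1 > 0" "y1 > 0" "x2 > 0" "y2 > 0"
  obtains s where "0 < s" "s < 1" "x1 + s * (x2 - x1) > 0" "y1 + s * (y2 - y1) > 0"
    "F x2 y2 - F x1 y1 = Fx (x1 + s * (x2 - x1)) (y1 + s * (y2 - y1)) * (x2 - x1)
                        + Fy (x1 + s * (x2 - x1)) (y1 + s * (y2 - y1)) * (y2 - y1)"
proof -
  have pos: "x1 + s * (x2 - x1) > 0 \<and> y1 + s * (y2 - y1) > 0" if "0 \<le> s" "s \<le> 1" for s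
  proof -
    have "x1 + s * (x2 - x1) = (1 - s) * x1 + s * x2" "y1 + s * (y2 - y1) = (1 - s) * y1 + s * y2"
      by algebra+
    moreover have "(1 - s) * x1 + s * x2 > 0" "(1 - s) * y1 + s * y2 > 0"
      using that assms by (cases "s = 0"; auto intro: add_nonneg_pos add_pos_nonneg)+
    ultimately show ?thesis by simp
  qed
  let ?h = "\<lambda>s. F (x1 + s * (x2 - x1)) (y1 + s * (y2 - y1))"
  let ?h' = "\<lambda>s. Fx (x1 + s * (x2 - x1)) (y1 + s * (y2 - y1)) * (x2 - x1)
                 + Fy (x1 + s * (x2 - x1)) (y1 + s * (y2 - y1)) * (y2 - y1)"
  have deriv: "(?h has_real_derivative ?h' s) (at s)" if "0 \<le> s" "s \<le> 1" for s
    using F_line_derivative pos[OF that] by blast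
  have "continuous_on {0..1} ?h"
    by (rule continuous_at_imp_continuous_on) (use deriv DERIV_isCont in force)
  moreover have "?h differentiable (at s)" if "0 < s" "s < 1" for s
    using deriv[of s] that unfolding real_differentiable_def by auto
  ultimately obtain l s where s: "0 < s" "s < 1" "(?h has_real_derivative l) (at s)" "?h 1 - ?h 0 = l"
    using MVT[of 0 1 ?h] by auto
  then have "l = ?h' s" using DERIV_unique deriv[of s] by simp
  with s show ?thesis using that pos[of s] by simp
qed

lemma F_strict_mono:
  assumes "x1 > 0" "y1 > 0" "x1 \<le> x2" "y1 \<le> y2" "x1 < x2 \<or> y1 < y2"
  shows "F x1 y1 < F x2 y2"
proof -
  obtain s where s: "x1 + s * (x2 - x1) > 0" "y1 + s * (y2 - y1) > 0"
    "F x2 y2 - F x1 y1 = Fx (x1 + s * (x2 - x1)) (y1 + s * (y2 - y1)) * (x2 - x1)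
                        + Fy (x1 + s * (x2 - x1)) (y1 + s * (y2 - y1)) * (y2 - y1)"
    using F_mean_value[of x1 y1 x2 y2] assms by auto
  have "0 < Fx (x1 + s * (x2 - x1)) (y1 + s * (y2 - y1)) * (x2 - x1)
          + Fy (x1 + s * (x2 - x1)) (y1 + s * (y2 - y1)) * (y2 - y1)"
    using Fx_pos[OF s(1,2)] Fy_pos[OF s(1,2)] assms(3-5)
    by (auto intro: add_pos_nonneg add_nonneg_pos)
  then show ?thesis using s(3) by simp
qed

lemma F_mono: "x1 > 0 \<Longrightarrow> y1 > 0 \<Longrightarrow> x1 \<le> x2 \<Longrightarrow> y1 \<le> y2 \<Longrightarrow> F x1 y1 \<le> F x2 y2"
  using F_strict_mono[of x1 y1 x2 y2] by (cases "x1 < x2 \<or> y1 < y2") auto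

text \<open>Strict convexity of the level sets: by the mean value theorem the chord between two points of
  a level curve is parallel to the tangent at an intermediate point, whose ratio x/y lies on the far
  side of x1/y1, so its slope G is strictly smaller in absolute value.\<close>
lemma level_set_above_tangent:
  assumes "x1 > 0" "y1 > 0" "x2 > 0" "y2 > 0" "F x1 y1 = F x2 y2" "(x1, y1) \<noteq> (x2, y2)"
  shows "G (x1 / y1) * (x2 - x1) + (y2 - y1) > 0"
proof -
  obtain s where s: "0 < s" "s < 1" "x1 + s * (x2 - x1) > 0" "y1 + s * (y2 - y1) > 0"
    "F x2 y2 - F x1 y1 = Fx (x1 + s * (x2 - x1)) (y1 + s * (y2 - y1)) * (x2 - x1)
                        + Fy (x1 + s * (x2 - x1)) (y1 + s * (y2 - y1)) * (y2 - y1)"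
    using F_mean_value[OF assms(1-4)] by blast
  define u where "u = x1 + s * (x2 - x1)"
  define v where "v = y1 + s * (y2 - y1)"
  define g where "g = G (u / v)"
  have uv: "u > 0" "v > 0" using s(3,4) unfolding u_def v_def .
  have "Fx u v = g * Fy u v"
    using marginal_rate_eq[OF uv] Fy_pos[OF uv] unfolding g_def by (simp add: field_simps)
  then have "Fy u v * (g * (x2 - x1) + (y2 - y1)) = 0"
    using s(5) assms(5) unfolding u_def v_def by (simp add: algebra_simps)
  then have slope: "y2 - y1 = - g * (x2 - x1)"
    using Fy_pos[OF uv] by simp
  have "g > 0" using G_pos uv unfolding g_def by simp
  have "x1 \<noteq> x2" using slope assms(6) by auto
  have "(G (x1 / y1) - g) * (x2 - x1) > 0"
  proof (cases "x1 < x2")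
    case True
    then have "x1 < u" "v < y1"
      using s(1) slope \<open>g > 0\<close> unfolding u_def v_def by (simp_all add: mult_pos_neg)
    then have "g < G (x1 / y1)"
      unfolding g_def using assms(1,2) uv by (intro G_strict_antimono frac_less) auto
    then show ?thesis using True by simp
  next
    case False
    then have "u < x1" "y1 < v"
      using s(1) slope \<open>g > 0\<close> \<open>x1 \<noteq> x2\<close> unfolding u_def v_def
      by (simp_all add: mult_pos_neg mult_neg_neg)
    then have "G (x1 / y1) < g"
      unfolding g_def using assms(1,2) uv by (intro G_strict_antimono frac_less divide_pos_pos) auto
    then show ?thesis using False \<open>x1 \<noteq> x2\<close> by (simp add: mult_neg_neg)
  qed
  then show ?thesis using slope by (simp add: algebra_simps)
qed

lemma ray_isCont: "r > 0 \<Longrightarrow> t > 0 \<Longrightarrow> isCont (\<lambda>t. F (r * t) t) t"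
  using DERIV_isCont[OF F_line_derivative[of 0 t r 0 1]] by (simp add: mult.commute)

lemma ray_strict_mono: "r > 0 \<Longrightarrow> 0 < t \<Longrightarrow> t < t' \<Longrightarrow> F (r * t) t < F (r * t') t'"
  by (intro F_strict_mono) auto

lemma ray_inj: "r > 0 \<Longrightarrow> t > 0 \<Longrightarrow> t' > 0 \<Longrightarrow> F (r * t) t = F (r * t') t' \<Longrightarrow> t = t'"
  using ray_strict_mono[of r t t'] ray_strict_mono[of r t' t] by (cases t t' rule: linorder_cases) auto

lemma ray_meets_unit_level:
  assumes "r > 0" shows "\<exists>t>0. F (r * t) t = F 1 1"
proof -
  define t0 where "t0 = min 1 (1 / r)"
  define t1 where "t1 = max 1 (1 / r)"
  have t0: "t0 > 0" "r * t0 \<le> 1" "t0 \<le> 1" and t1: "1 \<le> r * t1" "1 \<le> t1"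
    using assms by (auto simp: t0_def t1_def min_def max_def field_simps)
  have "F (r * t0) t0 \<le> F 1 1" "F 1 1 \<le> F (r * t1) t1" "t0 \<le> t1"
    using t0 t1 assms by (auto intro: F_mono)
  moreover have "\<forall>t. t0 \<le> t \<and> t \<le> t1 \<longrightarrow> isCont (\<lambda>t. F (r * t) t) t"
    using ray_isCont assms t0(1) by auto
  ultimately obtain t where "t0 \<le> t" "F (r * t) t = F 1 1"
    using IVT[of "\<lambda>t. F (r * t) t" t0 "F 1 1" t1] by blast
  then show ?thesis using t0(1) by (intro exI[of _ t]) auto
qed

definition psi :: "real \<Rightarrow> real" where
  "psi r = (SOME t. t > 0 \<and> F (r * t) t = F 1 1)"

lemma psi_pos: "r > 0 \<Longrightarrow> psi r > 0"
  and psi_level: "r > 0 \<Longrightarrow> F (r * psi r) (psi r) = F 1 1"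
  using someI_ex[OF ray_meets_unit_level] unfolding psi_def by auto

lemma psi_strict_antimono: "0 < r \<Longrightarrow> r < r' \<Longrightarrow> psi r' < psi r"
  and ray_point_strict_mono: "0 < r \<Longrightarrow> r < r' \<Longrightarrow> r * psi r < r' * psi r'"
proof -
  assume r: "0 < r" "r < r'"
  have p: "psi r > 0" "psi r' > 0" "F (r * psi r) (psi r) = F (r' * psi r') (psi r')"
    using r psi_pos psi_level by auto
  show *: "psi r' < psi r"
  proof (rule ccontr)
    assume "\<not> psi r' < psi r"
    have "r * psi r < r' * psi r" using p r by simp
    also have "\<dots> \<le> r' * psi r'" using r \<open>\<not> psi r' < psi r\<close> by simp
    finally have "r * psi r < r' * psi r'" .
    then have "F (r * psi r) (psi r) < F (r' * psi r') (psi r')"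
      using p r \<open>\<not> psi r' < psi r\<close> by (intro F_strict_mono) auto
    then show False using p by simp
  qed
  show "r * psi r < r' * psi r'"
  proof (rule ccontr)
    assume "\<not> r * psi r < r' * psi r'"
    then have "F (r' * psi r') (psi r') < F (r * psi r) (psi r)"
      using p r * by (intro F_strict_mono) auto
    then show False using p by simp
  qed
qed

lemma psi_dist_le:
  assumes "r > 0" "x > 0"
  shows "\<bar>psi x - psi r\<bar> \<le> psi r * \<bar>x - r\<bar> / x"
proof (cases x r rule: linorder_cases)
  case less
  then have "psi r < psi x" "x * psi x < r * psi r"
    using psi_strict_antimono ray_point_strict_mono assms by auto
  then have "x * (psi x - psi r) < psi r * (r - x)" by (simp add: algebra_simps)
  then show ?thesis using assms less \<open>psi r < psi x\<close> by (simp add: field_simps)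
next
  case greater
  then have "psi x < psi r" "r * psi r < x * psi x"
    using psi_strict_antimono ray_point_strict_mono assms by auto
  then have "x * (psi r - psi x) < psi r * (x - r)" by (simp add: algebra_simps)
  then show ?thesis using assms greater \<open>psi x < psi r\<close> by (simp add: field_simps)
qed simp

lemma psi_continuous_on: "continuous_on {0<..} psi"
proof (rule continuous_at_imp_continuous_on, safe)
  fix r :: real assume "r > 0"
  have "((\<lambda>x. psi x - psi r) \<longlongrightarrow> 0) (at r)"
  proof (rule Lim_null_comparison)
    show "eventually (\<lambda>x. norm (psi x - psi r) \<le> psi r * \<bar>x - r\<bar> / x) (at r)"
      using order_tendstoD(1)[OF tendsto_ident_at \<open>r > 0\<close>]
      by eventually_elim (use psi_dist_le \<open>r > 0\<close> in auto)
    have "((\<lambda>x. psi r * \<bar>x - r\<bar> / x) \<longlongrightarrow> psi r * \<bar>r - r\<bar> / r) (at r)"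
      using \<open>r > 0\<close> by (intro tendsto_intros) auto
    then show "((\<lambda>x. psi r * \<bar>x - r\<bar> / x) \<longlongrightarrow> 0) (at r)" by simp
  qed
  then show "isCont psi r" unfolding isCont_def using LIM_zero_iff by blast
qed

lemma ray_level_iff:
  assumes "r > 0" "\<beta> > 0" "t > 0"
  shows "F (r * t) t = F \<beta> 1 \<longleftrightarrow> t = psi r / psi \<beta>"
proof -
  have pos: "psi r > 0" "psi \<beta> > 0" using psi_pos assms by auto
  have "F ((1 / psi \<beta>) * (r * psi r)) ((1 / psi \<beta>) * psi r)
      = F ((1 / psi \<beta>) * (\<beta> * psi \<beta>)) ((1 / psi \<beta>) * psi \<beta>)"
    by (rule homothetic) (use assms pos psi_level[of r] psi_level[of \<beta>] in simp_all)
  then have level: "F (r * (psi r / psi \<beta>)) (psi r / psi \<beta>) = F \<beta> 1"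
    using pos by simp
  show ?thesis
  proof
    assume "F (r * t) t = F \<beta> 1"
    then show "t = psi r / psi \<beta>"
      using ray_inj[of r t "psi r / psi \<beta>"] level assms pos by simp
  qed (use level in simp)
qed

text \<open>The fractions of the pool (\<beta>, 1) withdrawn when it moves along its level curve of F
  to the point of price ratio r.\<close>
definition withdrawal :: "real \<Rightarrow> real \<Rightarrow> real \<times> real" where
  "withdrawal r \<beta> = (1 - r * psi r / (\<beta> * psi \<beta>), 1 - psi r / psi \<beta>)"

lemma phi_sys_iff:
  assumes "c > 0" "\<beta> > 0" "dB < 1"
  shows "phi_sys F G c \<beta> dA dB \<longleftrightarrow> (dA, dB) = withdrawal (Ginv G c) \<beta>"
proof -
  define r where "r = Ginv G c"
  have r: "r > 0" using Ginv_pos[OF assms(1)] unfolding r_def .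
  have "(1 - dA) / (1 - dB) = (1 / \<beta>) * r \<longleftrightarrow> \<beta> * (1 - dA) = r * (1 - dB)"
    using assms by (simp add: field_simps)
  then have "phi_sys F G c \<beta> dA dB \<longleftrightarrow> \<beta> * (1 - dA) = r * (1 - dB) \<and> F (\<beta> * (1 - dA)) (1 - dB) = F \<beta> 1"
    unfolding phi_sys_def r_def[symmetric] by simp
  also have "\<dots> \<longleftrightarrow> \<beta> * (1 - dA) = r * (1 - dB) \<and> F (r * (1 - dB)) (1 - dB) = F \<beta> 1"
    by metis
  also have "\<dots> \<longleftrightarrow> \<beta> * (1 - dA) = r * (1 - dB) \<and> 1 - dB = psi r / psi \<beta>"
    using ray_level_iff[OF r assms(2)] assms(3) by simp
  also have "\<dots> \<longleftrightarrow> 1 - dA = r * (1 - dB) / \<beta> \<and> 1 - dB = psi r / psi \<beta>"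
    using assms(2) by (auto simp: field_simps)
  also have "\<dots> \<longleftrightarrow> 1 - dA = r * psi r / (\<beta> * psi \<beta>) \<and> 1 - dB = psi r / psi \<beta>"
    by auto
  also have "\<dots> \<longleftrightarrow> (dA, dB) = withdrawal r \<beta>"
    unfolding withdrawal_def by auto
  finally show ?thesis unfolding r_def .
qed

lemma phi_sys_ex1:
  assumes "c > 0" "\<beta> > 0" "P (withdrawal (Ginv G c) \<beta>)" "\<And>p. P p \<Longrightarrow> snd p < 1"
  shows "\<exists>!p. P p \<and> phi_sys F G c \<beta> (fst p) (snd p)"
    and "(THE p. P p \<and> phi_sys F G c \<beta> (fst p) (snd p)) = withdrawal (Ginv G c) \<beta>"
proof -
  have "P p \<and> phi_sys F G c \<beta> (fst p) (snd p) \<longleftrightarrow> p = withdrawal (Ginv G c) \<beta>" for p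
  proof
    assume "P p \<and> phi_sys F G c \<beta> (fst p) (snd p)"
    then show "p = withdrawal (Ginv G c) \<beta>"
      using phi_sys_iff[OF assms(1,2) assms(4), of p "fst p"] by simp
  next
    assume "p = withdrawal (Ginv G c) \<beta>"
    then show "P p \<and> phi_sys F G c \<beta> (fst p) (snd p)"
      using phi_sys_iff[OF assms(1,2) assms(4)[OF assms(3)], of "fst p"] assms(3) by simp
  qed
  then show "\<exists>!p. P p \<and> phi_sys F G c \<beta> (fst p) (snd p)"
    and "(THE p. P p \<and> phi_sys F G c \<beta> (fst p) (snd p)) = withdrawal (Ginv G c) \<beta>"
    by simp_all
qed

lemma withdrawal_self: "\<beta> > 0 \<Longrightarrow> withdrawal \<beta> \<beta> = (0, 0)"
  using psi_pos[of \<beta>] by (simp add: withdrawal_def)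

lemma withdrawal_sell:
  assumes "0 < r" "r < \<beta>"
  shows "0 < fst (withdrawal r \<beta>) \<and> fst (withdrawal r \<beta>) < 1 \<and> snd (withdrawal r \<beta>) < 0"
  using psi_strict_antimono[OF assms] ray_point_strict_mono[OF assms] psi_pos[of r] psi_pos[of \<beta>] assms
  by (auto simp: withdrawal_def field_simps)

lemma withdrawal_buy:
  assumes "0 < \<beta>" "\<beta> < r"
  shows "fst (withdrawal r \<beta>) < 0 \<and> 0 < snd (withdrawal r \<beta>) \<and> snd (withdrawal r \<beta>) < 1"
  using psi_strict_antimono[OF assms] ray_point_strict_mono[OF assms] psi_pos[of r] psi_pos[of \<beta>] assms
  by (auto simp: withdrawal_def field_simps)

lemma withdrawal_strict_antimono_ratio:
  assumes "\<beta> > 0" "0 < r" "r < r'"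
  shows "fst (withdrawal r' \<beta>) < fst (withdrawal r \<beta>) \<and> snd (withdrawal r \<beta>) < snd (withdrawal r' \<beta>)"
  using psi_strict_antimono[OF assms(2,3)] ray_point_strict_mono[OF assms(2,3)] psi_pos[of \<beta>] assms(1)
  by (auto simp: withdrawal_def divide_strict_right_mono)

lemma withdrawal_strict_mono_pool:
  assumes "r > 0" "0 < \<beta>" "\<beta> < \<beta>'"
  shows "fst (withdrawal r \<beta>) < fst (withdrawal r \<beta>') \<and> snd (withdrawal r \<beta>') < snd (withdrawal r \<beta>)"
proof -
  have pos: "psi r > 0" "psi \<beta>' > 0" "\<beta> * psi \<beta> > 0" "r * psi r > 0"
    using psi_pos assms by auto
  have "r * psi r / (\<beta>' * psi \<beta>') < r * psi r / (\<beta> * psi \<beta>)" "psi r / psi \<beta> < psi r / psi \<beta>'"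
    using ray_point_strict_mono[OF assms(2,3)] psi_strict_antimono[OF assms(2,3)] pos
    by (auto intro!: divide_strict_left_mono)
  then show ?thesis unfolding withdrawal_def by simp
qed

lemma continuous_on_withdrawal:
  assumes "continuous_on S r" "continuous_on S \<beta>" "\<And>p. p \<in> S \<Longrightarrow> r p > 0 \<and> \<beta> p > 0"
  shows "continuous_on S (\<lambda>p. withdrawal (r p) (\<beta> p))"
proof -
  have "continuous_on S (\<lambda>p. psi (r p))" "continuous_on S (\<lambda>p. psi (\<beta> p))"
    using assms by (auto intro!: continuous_on_compose2[OF psi_continuous_on])
  moreover have "\<beta> p * psi (\<beta> p) \<noteq> 0" "psi (\<beta> p) \<noteq> 0" if "p \<in> S" for p
    using assms(3)[OF that] psi_pos[of "\<beta> p"] by auto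
  ultimately show ?thesis
    unfolding withdrawal_def using assms(1,2) by (intro continuous_intros) auto
qed

text \<open>The post-trade price ratio: \<beta> clamped to the interval of ratios at which the marginal rate G
  lies between the fee-adjusted valuations \<alpha>/(1+f) and \<alpha>(1+f).\<close>
definition trade_ratio :: "real \<Rightarrow> real \<Rightarrow> real \<Rightarrow> real" where
  "trade_ratio f \<alpha> \<beta> = min (Ginv G (\<alpha> / (1 + f))) (max (Ginv G (\<alpha> * (1 + f))) \<beta>)"

lemma trade_ratio_pos: "f > 0 \<Longrightarrow> \<alpha> > 0 \<Longrightarrow> \<beta> > 0 \<Longrightarrow> trade_ratio f \<alpha> \<beta> > 0"
  unfolding trade_ratio_def using Ginv_pos by auto

lemma Ginv_bid_less_ask:
  assumes "f > 0" "\<alpha> > 0"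
  shows "Ginv G (\<alpha> * (1 + f)) < Ginv G (\<alpha> / (1 + f))"
proof (rule Ginv_strict_antimono)
  show "0 < \<alpha> / (1 + f)" using assms by simp
  have "\<alpha> / (1 + f) < \<alpha>" using assms by (simp add: field_simps)
  also have "\<alpha> < \<alpha> * (1 + f)" using assms by simp
  finally show "\<alpha> / (1 + f) < \<alpha> * (1 + f)" .
qed

lemma sell_region_iff:
  assumes "f > 0" "\<alpha> > 0" "\<beta> > 0"
  shows "G \<beta> / \<alpha> < 1 / (1 + f) \<longleftrightarrow> Ginv G (\<alpha> / (1 + f)) < \<beta>"
proof -
  have "G \<beta> / \<alpha> < 1 / (1 + f) \<longleftrightarrow> G \<beta> < \<alpha> / (1 + f)"
    using assms by (simp add: field_simps)
  then show ?thesis using Ginv_less_iff[of "\<alpha> / (1 + f)" \<beta>] assms by simp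
qed

lemma buy_region_iff:
  assumes "f > 0" "\<alpha> > 0" "\<beta> > 0"
  shows "G \<beta> / \<alpha> > 1 + f \<longleftrightarrow> \<beta> < Ginv G (\<alpha> * (1 + f))"
proof -
  have "G \<beta> / \<alpha> > 1 + f \<longleftrightarrow> G \<beta> > \<alpha> * (1 + f)"
    using assms by (simp add: field_simps)
  then show ?thesis using less_Ginv_iff[of "\<alpha> * (1 + f)" \<beta>] assms by simp
qed

lemma trade_ratio_sell: "f > 0 \<Longrightarrow> \<alpha> > 0 \<Longrightarrow> Ginv G (\<alpha> / (1 + f)) < \<beta> \<Longrightarrow>
    trade_ratio f \<alpha> \<beta> = Ginv G (\<alpha> / (1 + f))"
  using Ginv_bid_less_ask[of f \<alpha>] by (simp add: trade_ratio_def)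

lemma trade_ratio_buy: "f > 0 \<Longrightarrow> \<alpha> > 0 \<Longrightarrow> \<beta> < Ginv G (\<alpha> * (1 + f)) \<Longrightarrow>
    trade_ratio f \<alpha> \<beta> = Ginv G (\<alpha> * (1 + f))"
  using Ginv_bid_less_ask[of f \<alpha>] by (simp add: trade_ratio_def)

lemma trade_ratio_no_trade:
  "f > 0 \<Longrightarrow> \<alpha> > 0 \<Longrightarrow> \<beta> > 0 \<Longrightarrow> no_trade G f \<alpha> \<beta> \<Longrightarrow> trade_ratio f \<alpha> \<beta> = \<beta>"
  unfolding no_trade_iff using sell_region_iff buy_region_iff by (simp add: trade_ratio_def not_less)

lemma sell_solution_unique:
  assumes "f > 0" "\<alpha> > 0" "\<beta> > 0" "G \<beta> / \<alpha> < 1 / (1 + f)"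
  defines "Q \<equiv> \<lambda>p. 0 < fst p \<and> fst p < 1 \<and> snd p < 0 \<and> phi_sys F G (\<alpha> / (1 + f)) \<beta> (fst p) (snd p)"
  shows "\<exists>!p. Q p" and "(THE p. Q p) = withdrawal (trade_ratio f \<alpha> \<beta>) \<beta>"
proof -
  have sell: "Ginv G (\<alpha> / (1 + f)) < \<beta>" using sell_region_iff assms(1-4) by blast
  note ex1 = phi_sys_ex1[where P = "\<lambda>p. 0 < fst p \<and> fst p < 1 \<and> snd p < 0"
      and c = "\<alpha> / (1 + f)", OF _ assms(3) withdrawal_sell[OF Ginv_pos sell]]
  show "\<exists>!p. Q p" "(THE p. Q p) = withdrawal (trade_ratio f \<alpha> \<beta>) \<beta>"
    using ex1 assms trade_ratio_sell[OF assms(1,2) sell] unfolding Q_def by (simp_all add: conj_assoc)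
qed

lemma buy_solution_unique:
  assumes "f > 0" "\<alpha> > 0" "\<beta> > 0" "G \<beta> / \<alpha> > 1 + f"
  defines "Q \<equiv> \<lambda>p. fst p < 0 \<and> 0 < snd p \<and> snd p < 1 \<and> phi_sys F G (\<alpha> * (1 + f)) \<beta> (fst p) (snd p)"
  shows "\<exists>!p. Q p" and "(THE p. Q p) = withdrawal (trade_ratio f \<alpha> \<beta>) \<beta>"
proof -
  have buy: "\<beta> < Ginv G (\<alpha> * (1 + f))" using buy_region_iff assms(1-4) by blast
  note ex1 = phi_sys_ex1[where P = "\<lambda>p. fst p < 0 \<and> 0 < snd p \<and> snd p < 1"
      and c = "\<alpha> * (1 + f)", OF _ assms(3) withdrawal_buy[OF assms(3) buy]]
  show "\<exists>!p. Q p" "(THE p. Q p) = withdrawal (trade_ratio f \<alpha> \<beta>) \<beta>"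
    using ex1 assms trade_ratio_buy[OF assms(1,2) buy] unfolding Q_def by (simp_all add: conj_assoc)
qed

lemma phi_eq_withdrawal:
  assumes "f > 0" "\<alpha> > 0" "\<beta> > 0"
  shows "phi F G f \<alpha> \<beta> = withdrawal (trade_ratio f \<alpha> \<beta>) \<beta>"
  using sell_solution_unique(2)[OF assms] buy_solution_unique(2)[OF assms]
    trade_ratio_no_trade[OF assms] withdrawal_self[OF assms(3)]
  unfolding phi_def no_trade_iff by auto

lemma trade_region_cases:
  assumes "f > 0" "\<alpha> > 0" "\<beta> > 0" "\<not> no_trade G f \<alpha> \<beta>"
  shows "Ginv G (\<alpha> / (1 + f)) < \<beta> \<or> \<beta> < Ginv G (\<alpha> * (1 + f))"
  using assms(4) sell_region_iff[OF assms(1-3)] buy_region_iff[OF assms(1-3)] unfolding no_trade_iff by blast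

lemma trade_ratio_strict_antimono_valuation:
  assumes "f > 0" "\<beta> > 0" "0 < \<alpha>1" "\<alpha>1 < \<alpha>2" "\<not> no_trade G f \<alpha>1 \<beta>" "\<not> no_trade G f \<alpha>2 \<beta>"
  shows "trade_ratio f \<alpha>2 \<beta> < trade_ratio f \<alpha>1 \<beta>"
proof -
  have "\<alpha>2 > 0" using assms by simp
  have hi: "Ginv G (\<alpha>2 / (1 + f)) < Ginv G (\<alpha>1 / (1 + f))"
    using assms by (intro Ginv_strict_antimono divide_strict_right_mono) auto
  have lo: "Ginv G (\<alpha>2 * (1 + f)) < Ginv G (\<alpha>1 * (1 + f))"
    using assms by (intro Ginv_strict_antimono) auto
  have "Ginv G (\<alpha>1 * (1 + f)) < Ginv G (\<alpha>1 / (1 + f))"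
    using Ginv_bid_less_ask assms by simp
  then show ?thesis
    using trade_region_cases[OF assms(1,3,2,5)] trade_region_cases[OF assms(1) \<open>\<alpha>2 > 0\<close> assms(2,6)] hi lo
      trade_ratio_sell[OF assms(1,3)] trade_ratio_sell[OF assms(1) \<open>\<alpha>2 > 0\<close>]
      trade_ratio_buy[OF assms(1,3)] trade_ratio_buy[OF assms(1) \<open>\<alpha>2 > 0\<close>]
    by fastforce
qed

lemma phi_strict_mono_valuation:
  assumes "f > 0" "\<beta> > 0" "0 < \<alpha>1" "\<alpha>1 < \<alpha>2" "\<not> no_trade G f \<alpha>1 \<beta>" "\<not> no_trade G f \<alpha>2 \<beta>"
  shows "phiA F G f \<alpha>1 \<beta> < phiA F G f \<alpha>2 \<beta> \<and> phiB F G f \<alpha>2 \<beta> < phiB F G f \<alpha>1 \<beta>"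
  using withdrawal_strict_antimono_ratio[OF assms(2) trade_ratio_pos trade_ratio_strict_antimono_valuation[OF assms]]
    phi_eq_withdrawal assms
  unfolding phiA_def phiB_def by simp

lemma phi_strict_mono_pool:
  assumes "f > 0" "\<alpha> > 0" "0 < \<beta>1" "\<beta>1 < \<beta>2" "\<not> no_trade G f \<alpha> \<beta>1" "\<not> no_trade G f \<alpha> \<beta>2"
  shows "phiA F G f \<alpha> \<beta>1 < phiA F G f \<alpha> \<beta>2 \<and> phiB F G f \<alpha> \<beta>2 < phiB F G f \<alpha> \<beta>1"
proof -
  let ?lo = "Ginv G (\<alpha> * (1 + f))" and ?hi = "Ginv G (\<alpha> / (1 + f))"
  have "\<beta>2 > 0" using assms by simp
  have lo: "?lo > 0" and hi: "?hi > 0" using assms Ginv_pos by auto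
  have "?lo < ?hi" using Ginv_bid_less_ask assms by simp
  then consider "?hi < \<beta>1" | "\<beta>2 < ?lo" | "\<beta>1 < ?lo" "?hi < \<beta>2"
    using trade_region_cases[OF assms(1,2,3,5)] trade_region_cases[OF assms(1,2) \<open>\<beta>2 > 0\<close> assms(6)] assms(4)
    by linarith
  then have "fst (withdrawal (trade_ratio f \<alpha> \<beta>1) \<beta>1) < fst (withdrawal (trade_ratio f \<alpha> \<beta>2) \<beta>2) \<and>
             snd (withdrawal (trade_ratio f \<alpha> \<beta>2) \<beta>2) < snd (withdrawal (trade_ratio f \<alpha> \<beta>1) \<beta>1)"
  proof cases
    case 1
    then show ?thesis
      using withdrawal_strict_mono_pool[OF hi assms(3,4)] assms by (simp add: trade_ratio_sell)
  next
    case 2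
    then show ?thesis
      using withdrawal_strict_mono_pool[OF lo assms(3,4)] assms by (simp add: trade_ratio_buy)
  next
    case 3
    then show ?thesis
      using withdrawal_buy[OF assms(3) 3(1)] withdrawal_sell[OF hi 3(2)] assms
      by (simp add: trade_ratio_sell trade_ratio_buy)
  qed
  then show ?thesis
    using phi_eq_withdrawal assms \<open>\<beta>2 > 0\<close> unfolding phiA_def phiB_def by simp
qed

lemma phi_continuous_on:
  assumes "f > 0"
  shows "continuous_on {p. fst p > 0 \<and> snd p > 0} (\<lambda>p. phi F G f (fst p) (snd p))"
proof -
  let ?S = "{p :: real \<times> real. fst p > 0 \<and> snd p > 0}"
  have "continuous_on ?S (\<lambda>p. Ginv G (fst p / (1 + f)))" "continuous_on ?S (\<lambda>p. Ginv G (fst p * (1 + f)))"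
    using assms by (auto intro!: continuous_on_compose2[OF Ginv_continuous_on] continuous_intros)
  then have "continuous_on ?S (\<lambda>p. trade_ratio f (fst p) (snd p))"
    unfolding trade_ratio_def by (intro continuous_intros)
  then have "continuous_on ?S (\<lambda>p. withdrawal (trade_ratio f (fst p) (snd p)) (snd p))"
    using trade_ratio_pos assms by (intro continuous_on_withdrawal continuous_intros) auto
  then show ?thesis
    by (rule continuous_on_eq) (use phi_eq_withdrawal assms in auto)
qed

lemma withdrawal_feasible:
  assumes "yA > 0" "yB > 0" "r > 0"
  defines "DA \<equiv> fst (withdrawal r (yA / yB)) * yA" and "DB \<equiv> snd (withdrawal r (yA / yB)) * yB"
  shows "feasible F yA yB DA DB" and "(yA - DA) / (yB - DB) = r"
proof -
  define \<beta> where "\<beta> = yA / yB"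
  define t where "t = psi r / psi \<beta>"
  have "\<beta> > 0" "t > 0" using assms psi_pos unfolding \<beta>_def t_def by auto
  have A: "yA - DA = yB * (r * t)" and B: "yB - DB = yB * t"
    using assms psi_pos[of \<beta>] \<open>\<beta> > 0\<close>
    unfolding DA_def DB_def \<beta>_def[symmetric] t_def withdrawal_def by (auto simp: field_simps \<beta>_def)
  have "F (r * t) t = F \<beta> 1" using ray_level_iff \<open>\<beta> > 0\<close> \<open>t > 0\<close> assms(3) unfolding t_def by blast
  then have "F (yB * (r * t)) (yB * t) = F (yB * \<beta>) (yB * 1)"
    using assms \<open>\<beta> > 0\<close> \<open>t > 0\<close> by (intro homothetic) auto
  then show "feasible F yA yB DA DB"
    using A B assms \<open>t > 0\<close> unfolding feasible_def \<beta>_def by simp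
  show "(yA - DA) / (yB - DB) = r" using A B assms \<open>t > 0\<close> by simp
qed

lemma trade_supergradient:
  assumes "f > 0" "a > 0" "b > 0" "\<beta> > 0"
  defines "R \<equiv> trade_ratio f (a / b) \<beta>"
  obtains \<mu> where "\<mu> > 0" "fee_supergradient a f (fst (withdrawal R \<beta>)) (G R * \<mu>)"
    "fee_supergradient b f (snd (withdrawal R \<beta>)) \<mu>"
proof -
  have \<alpha>: "a / b > 0" using assms by simp
  have fee: "a \<le> a * (1 + f)" "b \<le> b * (1 + f)" using assms by simp_all
  consider "G \<beta> / (a / b) < 1 / (1 + f)" | "G \<beta> / (a / b) > 1 + f" | "no_trade G f (a / b) \<beta>"
    unfolding no_trade_iff by blast
  then show ?thesis
  proof cases
    case 1
    then have sell: "Ginv G (a / b / (1 + f)) < \<beta>" using sell_region_iff[OF assms(1) \<alpha> assms(4)] by blast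
    then have "R = Ginv G (a / b / (1 + f))" unfolding R_def using trade_ratio_sell[OF assms(1) \<alpha>] by blast
    then have "G R = a / b / (1 + f)" using G_Ginv assms by simp
    then have "G R * (b * (1 + f)) = a" using assms by (simp add: divide_simps add_pos_pos)
    moreover have "0 < fst (withdrawal R \<beta>)" "snd (withdrawal R \<beta>) < 0"
      using withdrawal_sell[OF Ginv_pos sell] assms \<open>R = _\<close> by simp_all
    ultimately show ?thesis
      using that[of "b * (1 + f)"] fee assms unfolding fee_supergradient_def by simp
  next
    case 2
    then have buy: "\<beta> < Ginv G (a / b * (1 + f))" using buy_region_iff[OF assms(1) \<alpha> assms(4)] by blast
    then have "R = Ginv G (a / b * (1 + f))" unfolding R_def using trade_ratio_buy[OF assms(1) \<alpha>] by blast
    then have "G R = a / b * (1 + f)" using G_Ginv assms by simp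
    then have "G R * b = a * (1 + f)" using assms by simp
    moreover have "fst (withdrawal R \<beta>) < 0" "0 < snd (withdrawal R \<beta>)"
      using withdrawal_buy[OF assms(4) buy] \<open>R = _\<close> by simp_all
    ultimately show ?thesis
      using that[of b] fee assms unfolding fee_supergradient_def by simp
  next
    case 3
    text \<open>At the origin the objective has the whole box [a, a(1+f)] \<times> [b, b(1+f)] of supergradients,
      and the no-trade condition says exactly that the normal direction (G \<beta>, 1) of the level curve
      meets it.\<close>
    have "R = \<beta>" unfolding R_def using trade_ratio_no_trade[OF assms(1) \<alpha> assms(4) 3] .
    have "G \<beta> > 0" using G_pos assms(4) by simp
    have bounds: "a \<le> G \<beta> * (b * (1 + f))" "G \<beta> * b \<le> a * (1 + f)"
      using 3 assms \<open>G \<beta> > 0\<close> unfolding no_trade_def by (simp_all add: field_simps)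
    define \<mu> where "\<mu> = max b (a / G \<beta>)"
    have "a / G \<beta> \<le> b * (1 + f)" using bounds(1) \<open>G \<beta> > 0\<close> by (simp add: pos_divide_le_eq mult.commute)
    then have "b \<le> \<mu>" "\<mu> \<le> b * (1 + f)" using fee unfolding \<mu>_def by auto
    have "G \<beta> * \<mu> = max (G \<beta> * b) a"
      using \<open>G \<beta> > 0\<close> unfolding \<mu>_def by (simp add: max_def mult_left_mono field_simps)
    then have "a \<le> G \<beta> * \<mu>" "G \<beta> * \<mu> \<le> a * (1 + f)" using bounds(2) fee by auto
    then show ?thesis
      using that[of \<mu>] \<open>b \<le> \<mu>\<close> \<open>\<mu> \<le> b * (1 + f)\<close> assms withdrawal_self[OF assms(4)] \<open>R = \<beta>\<close>
      unfolding fee_supergradient_def by simp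
  qed
qed

lemma optimal_trade:
  assumes "f > 0" "yA > 0" "yB > 0" "a > 0" "b > 0"
  defines "DA \<equiv> phiA F G f (a / b) (yA / yB) * yA" and "DB \<equiv> phiB F G f (a / b) (yA / yB) * yB"
  shows "feasible F yA yB DA DB \<and>
    (\<forall>DA' DB'. feasible F yA yB DA' DB' \<and> (DA', DB') \<noteq> (DA, DB) \<longrightarrow>
       trade_obj f a b DA' DB' < trade_obj f a b DA DB)"
proof -
  define R where "R = trade_ratio f (a / b) (yA / yB)"
  have "yA / yB > 0" "R > 0" using trade_ratio_pos assms unfolding R_def by simp_all
  have D: "DA = fst (withdrawal R (yA / yB)) * yA" "DB = snd (withdrawal R (yA / yB)) * yB"
    using phi_eq_withdrawal assms unfolding DA_def DB_def R_def phiA_def phiB_def by simp_all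
  have feasible: "feasible F yA yB DA DB" and ratio: "(yA - DA) / (yB - DB) = R"
    using withdrawal_feasible[OF assms(2,3) \<open>R > 0\<close>] unfolding D by simp_all
  obtain \<mu> where "\<mu> > 0" "fee_supergradient a f (fst (withdrawal R (yA / yB))) (G R * \<mu>)"
      "fee_supergradient b f (snd (withdrawal R (yA / yB))) \<mu>"
    using trade_supergradient[OF assms(1,4,5) \<open>yA / yB > 0\<close>] unfolding R_def by blast
  then have sg: "fee_supergradient a f DA (G R * \<mu>)" "fee_supergradient b f DB \<mu>"
    using fee_supergradient_scale assms(2,3) unfolding D by (simp_all add: mult.commute)
  have "trade_obj f a b DA' DB' < trade_obj f a b DA DB"
    if feasible': "feasible F yA yB DA' DB'" and "(DA', DB') \<noteq> (DA, DB)" for DA' DB'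
  proof -
    have "(yA - DA, yB - DB) \<noteq> (yA - DA', yB - DB')" using that(2) by auto
    then have "G R * ((yA - DA') - (yA - DA)) + ((yB - DB') - (yB - DB)) > 0"
      using level_set_above_tangent[of "yA - DA" "yB - DB" "yA - DA'" "yB - DB'"] feasible feasible'
      unfolding ratio feasible_def by simp
    then have "\<mu> * (G R * (DA - DA') + (DB - DB')) > 0" using \<open>\<mu> > 0\<close> by simp
    then show ?thesis
      using trade_obj_le_supergradient[OF sg, of DA' DB'] by (simp add: algebra_simps)
  qed
  then show ?thesis using feasible by blast
qed

end

theorem proposition3p1:
  fixes F :: "real \<Rightarrow> real \<Rightarrow> real" and G :: "real \<Rightarrow> real" and f :: real
  assumes P: "assumption_P F G" and fpos: "f > 0"
  shows
    "(\<forall>\<alpha>>0. \<forall>\<beta>>0. G \<beta> / \<alpha> < 1 / (1 + f) \<longrightarrow>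
        (\<exists>!p. 0 < fst p \<and> fst p < 1 \<and> snd p < 0 \<and> phi_sys F G (\<alpha> / (1 + f)) \<beta> (fst p) (snd p))) \<and>
     (\<forall>\<alpha>>0. \<forall>\<beta>>0. G \<beta> / \<alpha> > 1 + f \<longrightarrow>
        (\<exists>!p. fst p < 0 \<and> 0 < snd p \<and> snd p < 1 \<and> phi_sys F G (\<alpha> * (1 + f)) \<beta> (fst p) (snd p))) \<and>
     continuous_on {p :: real \<times> real. fst p > 0 \<and> snd p > 0} (\<lambda>(\<alpha>, \<beta>). phiA F G f \<alpha> \<beta>) \<and>
     continuous_on {p :: real \<times> real. fst p > 0 \<and> snd p > 0} (\<lambda>(\<alpha>, \<beta>). phiB F G f \<alpha> \<beta>) \<and>
     (\<forall>\<alpha>>0. \<forall>\<beta>>0. no_trade G f \<alpha> \<beta> \<longrightarrow> phiA F G f \<alpha> \<beta> = 0 \<and> phiB F G f \<alpha> \<beta> = 0) \<and>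
     (\<forall>\<beta>>0. \<forall>\<alpha>1>0. \<forall>\<alpha>2>0. \<not> no_trade G f \<alpha>1 \<beta> \<and> \<not> no_trade G f \<alpha>2 \<beta> \<and> \<alpha>1 < \<alpha>2 \<longrightarrow>
        phiA F G f \<alpha>1 \<beta> < phiA F G f \<alpha>2 \<beta> \<and> phiB F G f \<alpha>2 \<beta> < phiB F G f \<alpha>1 \<beta>) \<and>
     (\<forall>\<alpha>>0. \<forall>\<beta>1>0. \<forall>\<beta>2>0. \<not> no_trade G f \<alpha> \<beta>1 \<and> \<not> no_trade G f \<alpha> \<beta>2 \<and> \<beta>1 < \<beta>2 \<longrightarrow>
        phiA F G f \<alpha> \<beta>1 < phiA F G f \<alpha> \<beta>2 \<and> phiB F G f \<alpha> \<beta>2 < phiB F G f \<alpha> \<beta>1) \<and>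
     (\<forall>yA>0. \<forall>yB>0. \<forall>a>0. \<forall>b>0.
        (let DA = phiA F G f (a / b) (yA / yB) * yA; DB = phiB F G f (a / b) (yA / yB) * yB in
         feasible F yA yB DA DB \<and>
         (\<forall>DA' DB'. feasible F yA yB DA' DB' \<and> (DA', DB') \<noteq> (DA, DB) \<longrightarrow>
            trade_obj f a b DA' DB' < trade_obj f a b DA DB)))"
proof -
  obtain Fx Fy where "homothetic_pricing G F Fx Fy"
    using assumption_P_imp_homothetic_pricing[OF P] by blast
  then interpret homothetic_pricing G F Fx Fy .
  have cont: "continuous_on {p. fst p > 0 \<and> snd p > 0} (\<lambda>p. phi F G f (fst p) (snd p))"
    by (rule phi_continuous_on[OF fpos])
  have "continuous_on {p. fst p > 0 \<and> snd p > 0} (\<lambda>(\<alpha>, \<beta>). phiA F G f \<alpha> \<beta>)"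
    "continuous_on {p. fst p > 0 \<and> snd p > 0} (\<lambda>(\<alpha>, \<beta>). phiB F G f \<alpha> \<beta>)"
    using continuous_on_fst[OF cont] continuous_on_snd[OF cont] by (simp_all add: phiA_def phiB_def split_def)
  moreover have "no_trade G f \<alpha> \<beta> \<Longrightarrow> phiA F G f \<alpha> \<beta> = 0 \<and> phiB F G f \<alpha> \<beta> = 0" for \<alpha> \<beta>
    by (simp add: phiA_def phiB_def phi_def no_trade_iff)
  ultimately show ?thesis
    unfolding Let_def
    apply (intro conjI)
    subgoal using sell_solution_unique(1)[OF fpos] by blast
    subgoal using buy_solution_unique(1)[OF fpos] by blast
    subgoal by assumption
    subgoal by assumption
    subgoal by blast
    subgoal using phi_strict_mono_valuation[OF fpos] by blast
    subgoal using phi_strict_mono_pool[OF fpos] by blast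
    subgoal using optimal_trade[OF fpos] by blast
    done
qed

end
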